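(* Let $L$ be a Latin array of order $n$, let $D$ be a diagonal of $L$ of weight $w$, and let $e$ be a cell of $D$. Then there is a diagonal of $L$ containing $e$, of weight at least $w$, on which each symbol appears at most twice.
   Context: A Latin array of order $n$ is an $n\times n$ matrix each of whose cells contains a symbol (from an arbitrary set of symbols), such that no symbol occurs more than once in any row or in any column. A diagonal of an $n\times n$ array is a selection of $n$ cells, one from each row and one from each column; its weight is the number of distinct symbols on it. *)

theory Defs
  imports Main "HOL-Combinatorics.Permutations"
begin

definition latin_array :: "nat \<Rightarrow> (nat \<Rightarrow> nat \<Rightarrow> 'a) \<Rightarrow> bool" where
  "latin_array n L \<longleftrightarrow>
     (\<forall>i<n. inj_on (\<lambda>j. L i j) {..<n}) \<and> (\<forall>j<n. inj_on (\<lambda>i. L i j) {..<n})"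

definition diagonal :: "nat \<Rightarrow> (nat \<Rightarrow> nat) \<Rightarrow> bool" where
  "diagonal n s \<longleftrightarrow> s permutes {..<n}"

definition diag_cells :: "nat \<Rightarrow> (nat \<Rightarrow> nat) \<Rightarrow> (nat \<times> nat) set" where
  "diag_cells n s = (\<lambda>i. (i, s i)) ` {..<n}"

definition weight :: "nat \<Rightarrow> (nat \<Rightarrow> nat \<Rightarrow> 'a) \<Rightarrow> (nat \<Rightarrow> nat) \<Rightarrow> nat" where
  "weight n L s = card ((\<lambda>i. L i (s i)) ` {..<n})"

definition occurrences :: "nat \<Rightarrow> (nat \<Rightarrow> nat \<Rightarrow> 'a) \<Rightarrow> (nat \<Rightarrow> nat) \<Rightarrow> 'a \<Rightarrow> nat" where
  "occurrences n L s x = card {i \<in> {..<n}. L i (s i) = x}"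

end

(* Lower the excess (the occurrences beyond the second, summed over all symbols) without
   losing the cell e or any weight. Suppose a symbol x occurs at least three times on the
   diagonal t. Take a row a carrying x other than the row of e, and swap it with a row r not
   carrying e: the diagonal loses the cells (a, t a), (r, t r) and gains (a, t r), (r, t a).
   By the Latin property the gained symbols differ from the lost ones, and as r varies each
   of them runs injectively over symbols other than x. So their diagonal multiplicities,
   summed over the n - 2 admissible r, total at most 2 (n - 3), and for some r the two
   gained symbols together occur at most once. After that swap x still occurs, each gained
   symbol occurs at most twice and one of them is new, and only L r (t r) can disappear. *)

theory Submission
  imports Defs
begin

lemma latin_array_row_eq_iff:
  assumes "latin_array n L" "i < n" "j < n" "j' < n"
  shows "L i j = L i j' \<longleftrightarrow> j = j'"
  using assms unfolding latin_array_def inj_on_def by blast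

lemma latin_array_col_eq_iff:
  assumes "latin_array n L" "j < n" "i < n" "i' < n"
  shows "L i j = L i' j \<longleftrightarrow> i = i'"
  using assms unfolding latin_array_def inj_on_def by blast

lemma occurrences_le: "occurrences n L t v \<le> n"
  unfolding occurrences_def
  by (metis (no_types, lifting) card_lessThan card_mono finite_lessThan mem_Collect_eq subsetI)

lemma occurrences_eq_sum: "occurrences n L t v = (\<Sum>i<n. of_bool (L i (t i) = v))"
  by (simp add: occurrences_def sum_of_bool_eq Int_def conj_commute)

lemma occurrences_eq_0_iff: "occurrences n L t v = 0 \<longleftrightarrow> v \<notin> (\<lambda>i. L i (t i)) ` {..<n}"
  by (auto simp: occurrences_def)

lemma weight_eq_card_occurring: "weight n L t = card {v. occurrences n L t v \<noteq> 0}"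
  unfolding weight_def occurrences_eq_0_iff by simp

lemma sum_occurrences:
  assumes "finite V"
  shows "(\<Sum>v\<in>V. occurrences n L t v) = card {i \<in> {..<n}. L i (t i) \<in> V}"
proof -
  have "{i \<in> {..<n}. L i (t i) \<in> V} = (\<Union>v\<in>V. {i \<in> {..<n}. L i (t i) = v})"
    by blast
  moreover have "card (\<Union>v\<in>V. {i \<in> {..<n}. L i (t i) = v})
      = (\<Sum>v\<in>V. card {i \<in> {..<n}. L i (t i) = v})"
    using assms by (intro card_UN_disjoint) auto
  ultimately show ?thesis
    unfolding occurrences_def by simp
qed

lemma sum_occurrences_le:
  assumes "finite V" "x \<notin> V"
  shows "(\<Sum>v\<in>V. occurrences n L t v) \<le> n - occurrences n L t x"
proof -
  have "{i \<in> {..<n}. L i (t i) \<in> V} \<subseteq> {..<n} - {i \<in> {..<n}. L i (t i) = x}"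
    using assms(2) by blast
  then have "card {i \<in> {..<n}. L i (t i) \<in> V} \<le> n - occurrences n L t x"
    unfolding occurrences_def by (metis (no_types, lifting) card_Diff_subset card_lessThan
        card_mono finite_Diff finite_lessThan finite_subset mem_Collect_eq subsetI)
  then show ?thesis using sum_occurrences[OF assms(1)] by simp
qed

(* Stated without subtraction, which would truncate on nat. *)
lemma occurrences_swap:
  assumes "a < n" "r < n" "a \<noteq> r"
  shows "occurrences n L (t \<circ> transpose a r) v + of_bool (L a (t a) = v) + of_bool (L r (t r) = v)
       = occurrences n L t v + of_bool (L a (t r) = v) + of_bool (L r (t a) = v)"
proof -
  have split: "(\<Sum>i<n. f i) = (\<Sum>i \<in> {..<n} - {a, r}. f i) + f a + f r" for f :: "nat \<Rightarrow> nat"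
    using assms by (subst sum.subset_diff[of "{a, r}"]) auto
  have "(\<Sum>i \<in> {..<n} - {a, r}. of_bool (L i ((t \<circ> transpose a r) i) = v))
      = (\<Sum>i \<in> {..<n} - {a, r}. of_bool (L i (t i) = v) :: nat)"
    by (intro sum.cong) auto
  then show ?thesis
    unfolding occurrences_eq_sum split using assms by simp
qed

lemma swap_partner_exists:
  assumes lat: "latin_array n L" and perm: "t permutes {..<n}"
    and "a < n" "b < n" "a \<noteq> b" and many: "occurrences n L t (L a (t a)) \<ge> 3"
  shows "\<exists>r<n. r \<noteq> a \<and> r \<noteq> b
           \<and> occurrences n L t (L a (t r)) + occurrences n L t (L r (t a)) \<le> 1"
proof (rule ccontr)
  assume no_partner: "\<not> ?thesis"
  define R where "R = {..<n} - {a, b}"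
  define occ where "occ = occurrences n L t"
  have t_less: "t r < n" if "r < n" for r
    using that permutes_in_image[OF perm] by simp
  have t_eq_iff: "t p = t q \<longleftrightarrow> p = q" for p q
    using permutes_inj[OF perm] by (auto dest: injD)
  have "(\<Sum>r\<in>R. occ (L a (t r))) = (\<Sum>v \<in> (\<lambda>r. L a (t r)) ` R. occ v)"
    using \<open>a < n\<close> by (intro sum.reindex_cong[symmetric])
      (auto simp: inj_on_def R_def latin_array_row_eq_iff[OF lat] t_less t_eq_iff)
  also have "\<dots> \<le> n - occ (L a (t a))"
    unfolding occ_def using \<open>a < n\<close>
    by (intro sum_occurrences_le) (auto simp: R_def latin_array_row_eq_iff[OF lat] t_less t_eq_iff)
  finally have row: "(\<Sum>r\<in>R. occ (L a (t r))) \<le> n - occ (L a (t a))" .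
  have "(\<Sum>r\<in>R. occ (L r (t a))) = (\<Sum>v \<in> (\<lambda>r. L r (t a)) ` R. occ v)"
    using \<open>a < n\<close> by (intro sum.reindex_cong[symmetric])
      (auto simp: inj_on_def R_def latin_array_col_eq_iff[OF lat] t_less)
  also have "\<dots> \<le> n - occ (L a (t a))"
    unfolding occ_def using \<open>a < n\<close>
    by (intro sum_occurrences_le) (auto simp: R_def latin_array_col_eq_iff[OF lat] t_less)
  finally have col: "(\<Sum>r\<in>R. occ (L r (t a))) \<le> n - occ (L a (t a))" .
  have "2 * (n - 2) = (\<Sum>r\<in>R. 2)"
    using assms(3-5) by (simp add: R_def card_Diff_subset)
  also have "\<dots> \<le> (\<Sum>r\<in>R. occ (L a (t r)) + occ (L r (t a)))"
    using no_partner by (intro sum_mono) (auto simp: R_def occ_def)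
  also have "\<dots> \<le> 2 * (n - occ (L a (t a)))"
    using row col by (simp add: sum.distrib)
  finally show False
    using many occurrences_le[of n L t "L a (t a)"] by (simp add: occ_def)
qed

lemma weight_le_by_exchange:
  assumes kept: "\<And>v. v \<noteq> u \<Longrightarrow> occurrences n L t v \<noteq> 0 \<Longrightarrow> occurrences n L t' v \<noteq> 0"
    and gained: "occurrences n L t w = 0" "occurrences n L t' w \<noteq> 0"
  shows "weight n L t \<le> weight n L t'"
proof -
  define A where "A = {v. occurrences n L t v \<noteq> 0}"
  define B where "B = {v. occurrences n L t' v \<noteq> 0}"
  have finite: "finite A" "finite B"
    by (simp_all add: A_def B_def occurrences_eq_0_iff)
  have "card A \<le> Suc (card (A - {u}))"
    using finite(1) by (cases "u \<in> A") (simp_all add: card_Diff_singleton)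
  also have "\<dots> = card (insert w (A - {u}))"
    using finite gained by (simp add: A_def)
  also have "\<dots> \<le> card B"
    using finite kept gained by (intro card_mono) (auto simp: A_def B_def)
  finally show ?thesis
    by (simp add: weight_eq_card_occurring A_def B_def)
qed

(* Summing over all symbols of the array makes the index set independent of the diagonal. *)
definition excess :: "nat \<Rightarrow> (nat \<Rightarrow> nat \<Rightarrow> 'a) \<Rightarrow> (nat \<Rightarrow> nat) \<Rightarrow> nat" where
  "excess n L t = (\<Sum>v \<in> case_prod L ` ({..<n} \<times> {..<n}). occurrences n L t v - 2)"

lemma excess_less:
  assumes "\<And>v. occurrences n L t' v - 2 \<le> occurrences n L t v - 2"
    and "i < n" "j < n" "occurrences n L t' (L i j) - 2 < occurrences n L t (L i j) - 2"
  shows "excess n L t' < excess n L t"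
  unfolding excess_def using assms by (intro sum_strict_mono_ex1) force+

lemma swap_symbols_distinct:
  assumes lat: "latin_array n L" and perm: "t permutes {..<n}"
    and "a < n" "r < n" "a \<noteq> r"
  shows "L a (t a) \<noteq> L a (t r)" "L r (t r) \<noteq> L r (t a)"
    and "L a (t a) \<noteq> L r (t a)" "L r (t r) \<noteq> L a (t r)"
proof -
  have t_less: "t i < n" if "i < n" for i
    using that permutes_in_image[OF perm] by simp
  have t_eq_iff: "t p = t q \<longleftrightarrow> p = q" for p q
    using permutes_inj[OF perm] by (simp add: inj_eq)
  show "L a (t a) \<noteq> L a (t r)" "L r (t r) \<noteq> L r (t a)"
    using assms(3-5) by (simp_all add: latin_array_row_eq_iff[OF lat] t_less t_eq_iff)
  show "L a (t a) \<noteq> L r (t a)" "L r (t r) \<noteq> L a (t r)"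
    using assms(3-5) by (simp_all add: latin_array_col_eq_iff[OF lat] t_less)
qed

context
  fixes n :: nat and L :: "nat \<Rightarrow> nat \<Rightarrow> 'a" and t :: "nat \<Rightarrow> nat" and a r :: nat
  assumes lat: "latin_array n L" and perm: "t permutes {..<n}"
    and a_less: "a < n" and r_less: "r < n" and a_ne_r: "a \<noteq> r"
    and many: "occurrences n L t (L a (t a)) \<ge> 3"
    and partner: "occurrences n L t (L a (t r)) + occurrences n L t (L r (t a)) \<le> 1"
begin

lemma weight_le_good_swap: "weight n L t \<le> weight n L (t \<circ> transpose a r)"
proof -
  define t' where "t' = t \<circ> transpose a r"
  have swap: "occurrences n L t' v + of_bool (L a (t a) = v) + of_bool (L r (t r) = v)
      = occurrences n L t v + of_bool (L a (t r) = v) + of_bool (L r (t a) = v)" for v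
    unfolding t'_def by (rule occurrences_swap[OF a_less r_less a_ne_r])
  note distinct = swap_symbols_distinct[OF lat perm a_less r_less a_ne_r]
  have kept: "occurrences n L t' v \<noteq> 0"
    if "v \<noteq> L r (t r)" "occurrences n L t v \<noteq> 0" for v
    using swap[of v] many that by (cases "v = L a (t a)") auto
  have gained: "occurrences n L t' (L a (t r)) \<noteq> 0" "occurrences n L t' (L r (t a)) \<noteq> 0"
    using swap[of "L a (t r)"] swap[of "L r (t a)"] distinct by auto
  have "occurrences n L t (L a (t r)) = 0 \<or> occurrences n L t (L r (t a)) = 0"
    using partner by linarith
  then show ?thesis
    using weight_le_by_exchange[OF kept _ gained(1)] weight_le_by_exchange[OF kept _ gained(2)]
    unfolding t'_def by blast
qed

lemma excess_less_good_swap: "excess n L (t \<circ> transpose a r) < excess n L t"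
proof -
  define t' where "t' = t \<circ> transpose a r"
  have swap: "occurrences n L t' v + of_bool (L a (t a) = v) + of_bool (L r (t r) = v)
      = occurrences n L t v + of_bool (L a (t r) = v) + of_bool (L r (t a) = v)" for v
    unfolding t'_def by (rule occurrences_swap[OF a_less r_less a_ne_r])
  note distinct = swap_symbols_distinct[OF lat perm a_less r_less a_ne_r]
  have "excess n L t' < excess n L t"
  proof (rule excess_less)
    show "occurrences n L t' v - 2 \<le> occurrences n L t v - 2" for v
    proof (cases "v = L a (t r) \<or> v = L r (t a)")
      case True
      have "occurrences n L t' v
          \<le> occurrences n L t v + of_bool (L a (t r) = v) + of_bool (L r (t a) = v)"
        using swap[of v] by linarith
      then have "occurrences n L t' v \<le> 2"
        using True partner by (cases "L a (t r) = L r (t a)") auto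
      then show ?thesis
        by simp
    next
      case False
      then have "occurrences n L t' v \<le> occurrences n L t v"
        using swap[of v] by auto
      then show ?thesis
        by (rule diff_le_mono)
    qed
    show "occurrences n L t' (L a (t a)) - 2 < occurrences n L t (L a (t a)) - 2"
      using swap[of "L a (t a)"] many distinct by simp
  qed (use a_less permutes_in_image[OF perm] in auto)
  then show ?thesis
    unfolding t'_def .
qed

end

lemma improving_swap:
  assumes lat: "latin_array n L" and diag: "diagonal n t" and e: "e \<in> diag_cells n t"
    and many: "occurrences n L t x \<ge> 3"
  shows "\<exists>t'. diagonal n t' \<and> e \<in> diag_cells n t' \<and> weight n L t \<le> weight n L t'
           \<and> excess n L t' < excess n L t"
proof -
  have perm: "t permutes {..<n}"
    using diag by (simp add: diagonal_def)
  obtain i0 where i0: "i0 < n" "e = (i0, t i0)"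
    using e by (auto simp: diag_cells_def)
  obtain a where a: "a < n" "a \<noteq> i0" "L a (t a) = x"
  proof -
    have "\<not> {i \<in> {..<n}. L i (t i) = x} \<subseteq> {i0}"
      using many card_mono[of "{i0}" "{i \<in> {..<n}. L i (t i) = x}"]
      by (auto simp: occurrences_def)
    then show ?thesis
      using that by blast
  qed
  obtain r where r: "r < n" "r \<noteq> a" "r \<noteq> i0"
    and partner: "occurrences n L t (L a (t r)) + occurrences n L t (L r (t a)) \<le> 1"
    using swap_partner_exists[OF lat perm a(1) i0(1) a(2)] many a(3) by blast
  have "diagonal n (t \<circ> transpose a r)"
    unfolding diagonal_def using a(1) r(1)
    by (intro permutes_compose[OF permutes_swap_id perm]) auto
  moreover have "e \<in> diag_cells n (t \<circ> transpose a r)"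
    using i0 a(2) r(3) by (auto simp: diag_cells_def)
  moreover note weight_le_good_swap[OF lat perm a(1) r(1) r(2)[symmetric] _ partner]
    excess_less_good_swap[OF lat perm a(1) r(1) r(2)[symmetric] _ partner]
  ultimately show ?thesis
    using many a(3) by blast
qed

theorem lemma2p3:
  fixes L :: "nat \<Rightarrow> nat \<Rightarrow> 'a" and n :: nat and s :: "nat \<Rightarrow> nat" and e :: "nat \<times> nat"
  assumes "latin_array n L"
    and "diagonal n s"
    and "e \<in> diag_cells n s"
  shows "\<exists>t. diagonal n t \<and> e \<in> diag_cells n t \<and> weight n L t \<ge> weight n L s
             \<and> (\<forall>x. occurrences n L t x \<le> 2)"
  using assms(2,3)
proof (induction "excess n L s" arbitrary: s rule: less_induct)
  case less
  show ?case
  proof (cases "\<forall>x. occurrences n L s x \<le> 2")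
    case True
    with less.prems show ?thesis
      by blast
  next
    case False
    then obtain x where "2 < occurrences n L s x"
      by (auto simp: not_le)
    then have "occurrences n L s x \<ge> 3"
      by simp
    then obtain t where t: "diagonal n t" "e \<in> diag_cells n t"
      "weight n L s \<le> weight n L t" "excess n L t < excess n L s"
      using improving_swap[OF assms(1) less.prems] by blast
    with less.hyps[OF t(4) t(1,2)] show ?thesis
      by (meson order_trans)
  qed
qed

end
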